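(* Let $(W,S)$ be a Coxeter system of finite rank and $S'$ another set of Coxeter generators of $W$ such that $S'\subseteq S^W$ and $S$ is sharp-angled with respect to $S'$. Let $B\subseteq S$ and $B'\subseteq S'$ satisfy $\langle B\rangle=\langle B'\rangle$. Then $B'\subseteq B^{\langle B\rangle}$ and $B$ is sharp-angled with respect to $B'$ (as sets of Coxeter generators of $\langle B\rangle$).
   Context: Coxeter system $(W,S)$: $W=\langle S\mid (st)^{m(s,t)}\ (m(s,t)<\infty)\rangle$, $m(s,s)=1$, $m(s,t)=m(t,s)\in\{2,\dots,\infty\}$; $S$ is a set of Coxeter generators. For a group $G$ and subset $X$, $X^G=\{gxg^{-1}: g\in G, x\in X\}$. If $S'\subseteq S^W$ is another set of Coxeter generators of $W$, $S$ is sharp-angled with respect to $S'$ if for all $s,t\in S$ with $2<m(s,t)<\infty$ there exists $w\in W$ with $w\{s,t\}w^{-1}\subseteq S'$ (for $B,B'$ generating $\langle B\rangle$, the same definition is used with $W$ replaced by $\langle B\rangle$). *)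

theory Defs
  imports "HOL-Algebra.Algebra"
begin

text \<open>Coxeter matrix entry m(s,t): the order of s t in G (0 encodes infinity).\<close>
definition cox_m :: "('a, 'b) monoid_scheme \<Rightarrow> 'a \<Rightarrow> 'a \<Rightarrow> nat" where
  "cox_m G s t = group.ord G (s \<otimes>\<^bsub>G\<^esub> t)"

fun alt_word :: "'a \<Rightarrow> 'a \<Rightarrow> nat \<Rightarrow> 'a list" where
  "alt_word s t 0 = []"
| "alt_word s t (Suc n) = s # alt_word t s n"

text \<open>Coxeter relators (s t)^m(s,t) for m(s,t) finite (includes s s since m(s,s) = 1).\<close>
definition cox_relators :: "('a, 'b) monoid_scheme \<Rightarrow> 'a set \<Rightarrow> 'a list set" where
  "cox_relators G S =
     {alt_word s t (2 * cox_m G s t) | s t. s \<in> S \<and> t \<in> S \<and> cox_m G s t \<noteq> 0}"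

inductive cox_step :: "('a, 'b) monoid_scheme \<Rightarrow> 'a set \<Rightarrow> 'a list \<Rightarrow> 'a list \<Rightarrow> bool"
  for G S where
  "r \<in> cox_relators G S \<Longrightarrow> cox_step G S (u @ v) (u @ r @ v)"

definition cox_equiv :: "('a, 'b) monoid_scheme \<Rightarrow> 'a set \<Rightarrow> 'a list \<Rightarrow> 'a list \<Rightarrow> bool" where
  "cox_equiv G S = (\<lambda>x y. cox_step G S x y \<or> cox_step G S y x)\<^sup>*\<^sup>*"

definition word_prod :: "('a, 'b) monoid_scheme \<Rightarrow> 'a list \<Rightarrow> 'a" where
  "word_prod G w = foldr (\<lambda>x y. monoid.mult G x y) w \<one>\<^bsub>G\<^esub>"

text \<open>(G,S) is a Coxeter system: S is a generating set of involutions such that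
  G has the presentation  < S | (s t)^m(s,t) , m(s,t) finite >,
  i.e. every word in S evaluating to 1 is a consequence of the relators.\<close>
definition coxeter_system :: "('a, 'b) monoid_scheme \<Rightarrow> 'a set \<Rightarrow> bool" where
  "coxeter_system G S \<longleftrightarrow>
     group G \<and> S \<subseteq> carrier G \<and> generate G S = carrier G \<and>
     (\<forall>s\<in>S. s \<otimes>\<^bsub>G\<^esub> s = \<one>\<^bsub>G\<^esub>) \<and>
     (\<forall>w\<in>lists S. word_prod G w = \<one>\<^bsub>G\<^esub> \<longrightarrow> cox_equiv G S w [])"

definition conj_set :: "('a, 'b) monoid_scheme \<Rightarrow> 'a set \<Rightarrow> 'a set" where
  "conj_set G Y = {monoid.mult G (monoid.mult G g x) (m_inv G g) | g x. g \<in> carrier G \<and> x \<in> Y}"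

definition sharp_angled :: "('a, 'b) monoid_scheme \<Rightarrow> 'a set \<Rightarrow> 'a set \<Rightarrow> bool" where
  "sharp_angled G S S' \<longleftrightarrow>
     (\<forall>s\<in>S. \<forall>t\<in>S. 2 < cox_m G s t \<and> cox_m G s t \<noteq> 0 \<longrightarrow>
        (\<exists>w\<in>carrier G. monoid.mult G (monoid.mult G w s) (m_inv G w) \<in> S' \<and>
                        monoid.mult G (monoid.mult G w t) (m_inv G w) \<in> S'))"

end

theory Submission
  imports Defs
begin

text \<open>
  For \<open>g \<in> W\<close> let \<open>N(g)\<close> be the set of reflections crossed an odd number of times by an
  \<open>S\<close>-word for \<open>g\<close>. Every Coxeter relator crosses each reflection an even number of times,
  so by the presentation \<open>N(g)\<close> depends only on \<open>g\<close>; it satisfies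
  \<open>N(g h) = N(g) \<triangle> g N(h) g\<inverse>\<close>, \<open>N(s) = {s}\<close> for \<open>s \<in> S\<close>, and \<open>|N(g)|\<close> is the length of \<open>g\<close>
  with respect to any \<open>J \<subseteq> S\<close> with \<open>g \<in> \<langle>J\<rangle>\<close>, since a reduced word crosses distinct reflections.

  A reflection \<open>b \<in> \<langle>B\<rangle>\<close> lies in \<open>N(b)\<close>, and \<open>N(b)\<close> consists of \<open>\<langle>B\<rangle>\<close>-conjugates of the
  letters of a \<open>B\<close>-word for \<open>b\<close>; this gives \<open>B' \<subseteq> B\<^bsup>\<langle>B\<rangle>\<^esup>\<close>.
  For the second claim, take \<open>s, t \<in> B\<close> and \<open>w\<close> with \<open>w{s,t}w\<inverse> \<subseteq> S'\<close>, and let \<open>g = y w\<inverse>\<close>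
  (\<open>y \<in> \<langle>B'\<rangle>\<close>) have the fewest \<open>S'\<close>-inversions in its coset. Then \<open>N(g)\<close> avoids \<open>\<langle>B'\<rangle>\<close>, and
  counting inversions shows that every reflection \<open>g r g\<inverse>\<close> (\<open>r \<in> S'\<close>) lying in \<open>\<langle>B'\<rangle>\<close> has
  \<open>B'\<close>-length one. For \<open>r = w s w\<inverse>, w t w\<inverse>\<close> this puts \<open>y s y\<inverse>, y t y\<inverse>\<close> into \<open>B'\<close>, with
  \<open>y \<in> \<langle>B'\<rangle> = \<langle>B\<rangle>\<close>.
\<close>

section \<open>Words and the reflections they cross\<close>

definition conjugate :: "('a, 'b) monoid_scheme \<Rightarrow> 'a \<Rightarrow> 'a \<Rightarrow> 'a" where
  "conjugate G g t = g \<otimes>\<^bsub>G\<^esub> t \<otimes>\<^bsub>G\<^esub> inv\<^bsub>G\<^esub> g"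

text \<open>Elements of order at most two, so \<open>\<one>\<close> is included.\<close>
definition involutions :: "('a, 'b) monoid_scheme \<Rightarrow> 'a set" where
  "involutions G = {a \<in> carrier G. a \<otimes>\<^bsub>G\<^esub> a = \<one>\<^bsub>G\<^esub>}"

text \<open>For a word \<open>[s\<^sub>1, \<dots>, s\<^sub>n]\<close> the \<open>i\<close>-th entry is
  \<open>(s\<^sub>1 \<cdots> s\<^sub>i\<^sub>-\<^sub>1) s\<^sub>i (s\<^sub>1 \<cdots> s\<^sub>i\<^sub>-\<^sub>1)\<inverse>\<close>, the reflection crossed at the \<open>i\<close>-th step.\<close>
fun word_reflections :: "('a, 'b) monoid_scheme \<Rightarrow> 'a list \<Rightarrow> 'a list" where
  "word_reflections G [] = []"
| "word_reflections G (a # x) = a # map (conjugate G a) (word_reflections G x)"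

definition word_parity :: "('a, 'b) monoid_scheme \<Rightarrow> 'a list \<Rightarrow> 'a \<Rightarrow> bool" where
  "word_parity G x t \<longleftrightarrow> odd (count_list (word_reflections G x) t)"

definition reduced_word :: "('a, 'b) monoid_scheme \<Rightarrow> 'a set \<Rightarrow> 'a list \<Rightarrow> bool" where
  "reduced_word G A x \<longleftrightarrow>
     x \<in> lists A \<and> (\<forall>y\<in>lists A. word_prod G y = word_prod G x \<longrightarrow> length x \<le> length y)"

lemma word_prod_Nil [simp]: "word_prod G [] = \<one>\<^bsub>G\<^esub>"
  by (simp add: word_prod_def)

lemma word_prod_Cons [simp]: "word_prod G (a # x) = a \<otimes>\<^bsub>G\<^esub> word_prod G x"
  by (simp add: word_prod_def)

lemma length_word_reflections [simp]: "length (word_reflections G x) = length x"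
  by (induction x) auto

lemma word_parity_Nil [simp]: "\<not> word_parity G [] t"
  by (simp add: word_parity_def)

lemma word_parity_singleton: "word_parity G [a] t \<longleftrightarrow> t = a"
  by (simp add: word_parity_def)

lemma odd_count_list_distinct: "distinct xs \<Longrightarrow> odd (count_list xs t) \<longleftrightarrow> t \<in> set xs"
  by (induction xs) auto

lemma reduced_word_exists:
  assumes "x \<in> lists A"
  shows "\<exists>y. reduced_word G A y \<and> word_prod G y = word_prod G x"
proof -
  obtain y where "y \<in> lists A" "word_prod G y = word_prod G x"
    and "\<And>z. z \<in> lists A \<and> word_prod G z = word_prod G x \<Longrightarrow> length y \<le> length z"
    using ex_has_least_nat[of "\<lambda>y. y \<in> lists A \<and> word_prod G y = word_prod G x" x length] assms
    by blast
  then show ?thesis unfolding reduced_word_def by (intro exI[of _ y]) auto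
qed

lemma alt_word_in_lists: "s \<in> A \<Longrightarrow> t \<in> A \<Longrightarrow> alt_word s t n \<in> lists A"
  by (induction n arbitrary: s t) auto

lemma count_list_map_upt_periodic:
  assumes "\<And>i. f (i + m) = f i"
  shows "count_list (map f [0..<2 * m]) x = 2 * count_list (map f [0..<m]) x"
proof -
  have "[0..<2 * m] = [0..<m] @ map (\<lambda>i. i + m) [0..<m]"
    by (simp add: mult_2 map_add_upt upt_add_eq_append[of 0 m m])
  then show ?thesis using assms by (simp add: comp_def)
qed

context group
begin

lemma word_prod_closed [simp]: "x \<in> lists (carrier G) \<Longrightarrow> word_prod G x \<in> carrier G"
  by (induction x) auto

lemma word_prod_append:
  "x \<in> lists (carrier G) \<Longrightarrow> y \<in> lists (carrier G) \<Longrightarrow>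
   word_prod G (x @ y) = word_prod G x \<otimes> word_prod G y"
  by (induction x) (auto simp: m_assoc)

lemma involutions_closed: "involutions G \<subseteq> carrier G"
  by (auto simp: involutions_def)

lemma involution_inv: "a \<in> involutions G \<Longrightarrow> inv a = a"
  by (auto simp: involutions_def intro: inv_equality)

lemma word_prod_rev:
  "x \<in> lists (involutions G) \<Longrightarrow> word_prod G (rev x) = inv (word_prod G x)"
proof (induction x)
  case (Cons a x)
  then have "a \<in> carrier G" "x \<in> lists (carrier G)" "rev x \<in> lists (carrier G)"
    using involutions_closed by auto
  with Cons show ?case by (simp add: word_prod_append involution_inv inv_mult_group)
qed simp

lemma word_prod_mem_generate: "A \<subseteq> carrier G \<Longrightarrow> x \<in> lists A \<Longrightarrow> word_prod G x \<in> generate G A"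
  by (induction x) (auto intro: generate.one generate.eng generate.incl)

lemma generate_involutions_eq:
  assumes "A \<subseteq> involutions G"
  shows "generate G A = word_prod G ` lists A"
proof
  have A: "A \<subseteq> carrier G" using assms involutions_closed by auto
  show "generate G A \<subseteq> word_prod G ` lists A"
  proof
    fix h assume "h \<in> generate G A"
    then show "h \<in> word_prod G ` lists A"
    proof induction
      case one
      show ?case by (rule image_eqI[of _ _ "[]"]) auto
    next
      case (incl h)
      then show ?case using A by (intro image_eqI[of _ _ "[h]"]) auto
    next
      case (inv h)
      then have "h \<in> carrier G" "inv h = h" using A assms involution_inv by auto
      with inv show ?case by (intro image_eqI[of _ _ "[h]"]) auto
    next
      case (eng h1 h2)
      then obtain x1 x2 where x: "x1 \<in> lists A" "x2 \<in> lists A" "h1 = word_prod G x1" "h2 = word_prod G x2"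
        by auto
      moreover have "x1 \<in> lists (carrier G)" "x2 \<in> lists (carrier G)" using x A by auto
      ultimately show ?case by (intro image_eqI[of _ _ "x1 @ x2"]) (auto simp: word_prod_append)
    qed
  qed
  show "word_prod G ` lists A \<subseteq> generate G A"
    using word_prod_mem_generate A by auto
qed

lemma conjugate_closed [simp]: "g \<in> carrier G \<Longrightarrow> t \<in> carrier G \<Longrightarrow> conjugate G g t \<in> carrier G"
  by (simp add: conjugate_def)

lemma conjugate_one [simp]: "t \<in> carrier G \<Longrightarrow> conjugate G \<one> t = t"
  by (simp add: conjugate_def)

lemma conjugate_conjugate:
  "a \<in> carrier G \<Longrightarrow> g \<in> carrier G \<Longrightarrow> t \<in> carrier G \<Longrightarrow>
   conjugate G a (conjugate G g t) = conjugate G (a \<otimes> g) t"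
  by (simp add: conjugate_def m_assoc inv_mult_group)

lemma conjugate_inv_conjugate [simp]:
  "g \<in> carrier G \<Longrightarrow> t \<in> carrier G \<Longrightarrow> conjugate G (inv g) (conjugate G g t) = t"
  "g \<in> carrier G \<Longrightarrow> t \<in> carrier G \<Longrightarrow> conjugate G g (conjugate G (inv g) t) = t"
  by (simp_all add: conjugate_conjugate)

lemma conjugate_eq_iff:
  "g \<in> carrier G \<Longrightarrow> y \<in> carrier G \<Longrightarrow> t \<in> carrier G \<Longrightarrow>
   conjugate G g y = t \<longleftrightarrow> y = conjugate G (inv g) t"
  by auto

lemma inj_on_conjugate: "g \<in> carrier G \<Longrightarrow> inj_on (conjugate G g) (carrier G)"
  by (rule inj_on_inverseI[of _ "conjugate G (inv g)"]) simp

lemma mem_conjugate_image_iff: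
  "g \<in> carrier G \<Longrightarrow> t \<in> carrier G \<Longrightarrow> M \<subseteq> carrier G \<Longrightarrow>
   t \<in> conjugate G g ` M \<longleftrightarrow> conjugate G (inv g) t \<in> M"
  by (auto simp: image_iff subset_iff intro!: bexI[of _ "conjugate G (inv g) t"])

lemma conjugate_mem_subgroup:
  "subgroup H G \<Longrightarrow> g \<in> H \<Longrightarrow> t \<in> H \<Longrightarrow> conjugate G g t \<in> H"
  unfolding conjugate_def by (intro subgroup.m_closed subgroup.m_inv_closed)

lemma conjugate_involution:
  assumes "g \<in> carrier G" "a \<in> involutions G"
  shows "conjugate G g a \<otimes> conjugate G g a = \<one>"
proof -
  have "a \<in> carrier G" "a \<otimes> a = \<one>" using assms by (auto simp: involutions_def)
  then have "a \<otimes> (a \<otimes> y) = y" "inv g \<otimes> (g \<otimes> y) = y" if "y \<in> carrier G" for y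
    using assms that by (simp_all flip: m_assoc)
  with assms \<open>a \<in> carrier G\<close> show ?thesis by (simp add: conjugate_def m_assoc)
qed

lemma word_reflections_closed: "x \<in> lists (carrier G) \<Longrightarrow> set (word_reflections G x) \<subseteq> carrier G"
  by (induction x) auto

lemma word_reflections_append:
  assumes "x \<in> lists (carrier G)" "y \<in> lists (carrier G)"
  shows "word_reflections G (x @ y) =
           word_reflections G x @ map (conjugate G (word_prod G x)) (word_reflections G y)"
  using assms(1)
proof (induction x)
  case Nil
  have "map (conjugate G \<one>) (word_reflections G y) = word_reflections G y"
    using word_reflections_closed[OF assms(2)] by (intro map_idI) auto
  then show ?case by simp
next
  case (Cons a x)
  then have "a \<in> carrier G" "word_prod G x \<in> carrier G" by auto
  then have "map (conjugate G a) (map (conjugate G (word_prod G x)) (word_reflections G y)) =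
             map (conjugate G (a \<otimes> word_prod G x)) (word_reflections G y)"
    using word_reflections_closed[OF assms(2)] by (auto simp: conjugate_conjugate)
  with Cons show ?case by simp
qed

lemma count_list_map_conjugate:
  "g \<in> carrier G \<Longrightarrow> set ys \<subseteq> carrier G \<Longrightarrow> t \<in> carrier G \<Longrightarrow>
   count_list (map (conjugate G g) ys) t = count_list ys (conjugate G (inv g) t)"
  by (induction ys) (auto simp: conjugate_eq_iff)

lemma word_parity_append:
  "x \<in> lists (carrier G) \<Longrightarrow> y \<in> lists (carrier G) \<Longrightarrow> t \<in> carrier G \<Longrightarrow>
   word_parity G (x @ y) t \<longleftrightarrow> word_parity G x t \<noteq> word_parity G y (conjugate G (inv (word_prod G x)) t)"
  unfolding word_parity_def
  by (simp add: word_reflections_append count_list_map_conjugate word_reflections_closed)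

lemma nth_word_reflections:
  "x \<in> lists (carrier G) \<Longrightarrow> i < length x \<Longrightarrow>
   word_reflections G x ! i = conjugate G (word_prod G (take i x)) (x ! i)"
proof (induction x arbitrary: i)
  case (Cons a x)
  show ?case
  proof (cases i)
    case 0
    with Cons show ?thesis by simp
  next
    case (Suc j)
    with Cons have "take j x \<in> lists (carrier G)" "x ! j \<in> carrier G"
      by (auto dest: in_set_takeD)
    with Cons Suc show ?thesis by (simp add: conjugate_conjugate)
  qed
qed simp

lemma word_reflections_subset_generate:
  assumes "A \<subseteq> carrier G" "x \<in> lists A"
  shows "set (word_reflections G x) \<subseteq> generate G A"
  using assms(2)
proof (induction x)
  case (Cons a x)
  then have "a \<in> generate G A" by (auto intro: generate.incl)
  with Cons show ?case
    using conjugate_mem_subgroup[OF generate_is_subgroup[OF assms(1)]] by auto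
qed simp

lemma nat_pow_mult_shift:
  "s \<in> carrier G \<Longrightarrow> t \<in> carrier G \<Longrightarrow> s \<otimes> (t \<otimes> s) [^] (i::nat) = (s \<otimes> t) [^] i \<otimes> s"
proof (induction i)
  case (Suc i)
  have "s \<otimes> (t \<otimes> s) [^] Suc i = (s \<otimes> (t \<otimes> s) [^] i) \<otimes> (t \<otimes> s)"
    using Suc.prems by (simp add: m_assoc)
  also have "\<dots> = (s \<otimes> t) [^] i \<otimes> s \<otimes> (t \<otimes> s)"
    using Suc.prems by (simp only: Suc.IH)
  also have "\<dots> = (s \<otimes> t) [^] Suc i \<otimes> s"
    using Suc.prems by (simp add: m_assoc)
  finally show ?case .
qed simp

lemma word_reflections_alt_word:
  assumes "s \<in> involutions G" "t \<in> involutions G"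
  shows "word_reflections G (alt_word s t n) = map (\<lambda>i. (s \<otimes> t) [^] i \<otimes> s) [0..<n]"
  using assms
proof (induction n arbitrary: s t)
  case (Suc n)
  then have carr: "s \<in> carrier G" "t \<in> carrier G" and "inv s = s"
    using involutions_closed involution_inv by auto
  have "conjugate G s ((t \<otimes> s) [^] i \<otimes> t) = s \<otimes> (t \<otimes> s) [^] i \<otimes> t \<otimes> s" for i :: nat
    using carr \<open>inv s = s\<close> by (simp add: conjugate_def m_assoc)
  then have "conjugate G s ((t \<otimes> s) [^] i \<otimes> t) = (s \<otimes> t) [^] Suc i \<otimes> s" for i :: nat
    using carr by (simp add: nat_pow_mult_shift m_assoc)
  with Suc carr show ?case by (simp add: map_upt_Suc del: upt_Suc)
qed simp

lemma word_prod_alt_word_double: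
  "s \<in> carrier G \<Longrightarrow> t \<in> carrier G \<Longrightarrow> word_prod G (alt_word s t (2 * k)) = (s \<otimes> t) [^] k"
proof (induction k)
  case (Suc k)
  have "alt_word s t (2 * Suc k) = s # t # alt_word s t (2 * k)"
    by (simp add: numeral_2_eq_2)
  then have "word_prod G (alt_word s t (2 * Suc k)) = (s \<otimes> t) \<otimes> (s \<otimes> t) [^] k"
    using Suc by (simp add: m_assoc)
  with Suc.prems show ?case by (simp only: nat_pow_Suc2 m_closed)
qed simp

text \<open>The reflections crossed by \<open>(s t)\<^sup>m\<close>, \<open>m = ord (s t)\<close>, run twice through one period.\<close>
lemma not_word_parity_relator:
  assumes "s \<in> involutions G" "t \<in> involutions G"
  shows "\<not> word_parity G (alt_word s t (2 * ord (s \<otimes> t))) r"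
proof -
  have st: "s \<otimes> t \<in> carrier G" using assms involutions_closed by auto
  have "(s \<otimes> t) [^] (i + ord (s \<otimes> t)) \<otimes> s = (s \<otimes> t) [^] i \<otimes> s" for i
    using st by (simp flip: nat_pow_mult)
  then show ?thesis
    unfolding word_parity_def word_reflections_alt_word[OF assms]
    by (subst count_list_map_upt_periodic) auto
qed

lemma word_reflection_mult_word_prod:
  assumes "x \<in> lists (involutions G)" "i < length x"
  shows "word_reflections G x ! i \<otimes> word_prod G x = word_prod G (take i x @ drop (Suc i) x)"
proof -
  let ?p = "word_prod G (take i x)" and ?a = "x ! i" and ?q = "word_prod G (drop (Suc i) x)"
  have x: "x \<in> lists (carrier G)" using assms(1) involutions_closed by auto
  then have carr: "take i x \<in> lists (carrier G)" "drop (Suc i) x \<in> lists (carrier G)"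
    by (auto dest: in_set_takeD in_set_dropD)
  have a: "?a \<in> carrier G" "?a \<otimes> ?a = \<one>"
    using assms by (auto simp: involutions_def)
  have "word_prod G x = word_prod G (take i x @ ?a # drop (Suc i) x)"
    using assms(2) by (simp add: id_take_nth_drop[symmetric])
  then have "word_prod G x = ?p \<otimes> (?a \<otimes> ?q)"
    using carr a by (simp add: word_prod_append)
  moreover have "inv ?p \<otimes> (?p \<otimes> y) = y" "?a \<otimes> (?a \<otimes> y) = y" if "y \<in> carrier G" for y
    using carr a that by (simp_all flip: m_assoc)
  ultimately have "conjugate G ?p ?a \<otimes> word_prod G x = ?p \<otimes> ?q"
    using carr a by (simp add: conjugate_def m_assoc)
  with x carr a assms(2) show ?thesis
    by (simp add: nth_word_reflections word_prod_append)
qed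

lemma word_reflections_involution:
  assumes "x \<in> lists (involutions G)" "i < length x"
  shows "word_reflections G x ! i \<otimes> word_reflections G x ! i = \<one>"
proof -
  have "x \<in> lists (carrier G)" "take i x \<in> lists (carrier G)" "x ! i \<in> involutions G"
    using assms involutions_closed by (auto dest: in_set_takeD)
  then show ?thesis
    using assms involutions_closed by (simp add: nth_word_reflections conjugate_involution)
qed

text \<open>Crossing a reflection twice, at letters \<open>i < j\<close>, lets one delete both letters.\<close>
lemma distinct_word_reflections_if_reduced:
  assumes A: "A \<subseteq> involutions G" and x: "reduced_word G A x"
  shows "distinct (word_reflections G x)"
proof (rule ccontr)
  assume "\<not> distinct (word_reflections G x)"
  then obtain i j where ij: "i < j" "j < length x"
    "word_reflections G x ! i = word_reflections G x ! j"
    by (metis distinct_conv_nth length_word_reflections linorder_neqE_nat)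
  define y where "y = take j x @ drop (Suc j) x"
  define z where "z = take i y @ drop (Suc i) y"
  let ?r = "word_reflections G x ! i"
  have xA: "x \<in> lists A"
    and x_min: "\<And>w. w \<in> lists A \<Longrightarrow> word_prod G w = word_prod G x \<Longrightarrow> length x \<le> length w"
    using x unfolding reduced_word_def by auto
  have yA: "y \<in> lists A" and zA: "z \<in> lists A"
    using xA unfolding y_def z_def by (auto dest: in_set_takeD in_set_dropD)
  have x_inv: "x \<in> lists (involutions G)" and y_inv: "y \<in> lists (involutions G)"
    using xA yA A by auto
  then have x_carr: "x \<in> lists (carrier G)" and y_carr: "y \<in> lists (carrier G)"
    using involutions_closed by auto
  have i_y: "i < length y" and "take i y = take i x" "y ! i = x ! i"
    using ij unfolding y_def by (auto simp: nth_append)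
  then have "word_reflections G y ! i = ?r"
    using ij x_carr y_carr by (simp add: nth_word_reflections)
  then have "word_prod G z = ?r \<otimes> (?r \<otimes> word_prod G x)"
    using word_reflection_mult_word_prod[OF y_inv i_y] word_reflection_mult_word_prod[OF x_inv ij(2)]
      ij(3)
    unfolding y_def z_def by simp
  also have "\<dots> = word_prod G x"
  proof -
    have "?r \<in> carrier G" "?r \<otimes> ?r = \<one>"
      using word_reflections_involution[OF x_inv] word_reflections_closed[OF x_carr] ij by auto
    with x_carr show ?thesis by (simp flip: m_assoc)
  qed
  finally have "length x \<le> length z" using x_min zA by simp
  moreover have "length z = length x - 2" using ij i_y unfolding y_def z_def by simp
  ultimately show False using ij by simp
qed

lemma conjugate_subgroup:
  "subgroup H G \<Longrightarrow> g \<in> H \<Longrightarrow> conjugate (G\<lparr>carrier := H\<rparr>) g t = conjugate G g t"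
  by (simp add: conjugate_def m_inv_consistent)

lemma conj_set_subgroup:
  assumes "subgroup H G"
  shows "conj_set (G\<lparr>carrier := H\<rparr>) Y = {conjugate G h y | h y. h \<in> H \<and> y \<in> Y}"
  using m_inv_consistent[OF assms] by (force simp: conj_set_def conjugate_def)

lemma cox_m_subgroup: "subgroup H G \<Longrightarrow> cox_m (G\<lparr>carrier := H\<rparr>) s t = cox_m G s t"
  unfolding cox_m_def ord_def group.ord_def[OF subgroup.subgroup_is_group[OF _ is_group]]
  by (simp add: nat_pow_def)

lemma sharp_angled_subgroup_iff:
  assumes "subgroup H G"
  shows "sharp_angled (G\<lparr>carrier := H\<rparr>) A A' \<longleftrightarrow>
           (\<forall>s\<in>A. \<forall>t\<in>A. 2 < cox_m G s t \<and> cox_m G s t \<noteq> 0 \<longrightarrow>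
              (\<exists>w\<in>H. conjugate G w s \<in> A' \<and> conjugate G w t \<in> A'))"
  using assms unfolding sharp_angled_def
  by (simp add: cox_m_subgroup conjugate_subgroup flip: conjugate_def cong: bex_cong)

end

section \<open>The reflection cocycle of a Coxeter system\<close>

locale coxeter_group = group G for G (structure) +
  fixes S
  assumes coxeter_system: "coxeter_system G S"

lemma coxeter_groupI: "coxeter_system G S \<Longrightarrow> coxeter_group G S"
  by (simp add: coxeter_group_def coxeter_group_axioms_def coxeter_system_def)

context coxeter_group
begin

lemma gens_involutions: "S \<subseteq> involutions G"
  using coxeter_system unfolding coxeter_system_def involutions_def by auto

lemma gens_closed: "S \<subseteq> carrier G"
  using gens_involutions involutions_closed by auto

lemma generate_gens: "generate G S = carrier G"
  using coxeter_system unfolding coxeter_system_def by auto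

lemma lists_gens_carrier: "x \<in> lists S \<Longrightarrow> x \<in> lists (carrier G)"
  using gens_closed by auto

lemma cox_relatorsD:
  assumes "r \<in> cox_relators G S"
  shows "r \<in> lists S" "word_prod G r = \<one>" "\<not> word_parity G r t"
proof -
  obtain a b where r: "r = alt_word a b (2 * ord (a \<otimes> b))" and ab: "a \<in> S" "b \<in> S"
    using assms unfolding cox_relators_def cox_m_def by auto
  then show "r \<in> lists S" by (simp add: alt_word_in_lists)
  have "a \<in> carrier G" "b \<in> carrier G" using ab gens_closed by auto
  then show "word_prod G r = \<one>" by (simp add: r word_prod_alt_word_double)
  have "a \<in> involutions G" "b \<in> involutions G" using ab gens_involutions by auto
  then show "\<not> word_parity G r t" by (simp add: r not_word_parity_relator)
qed

lemma word_parity_insert_relator: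
  assumes "r \<in> cox_relators G S" "u \<in> lists (carrier G)" "v \<in> lists (carrier G)" "t \<in> carrier G"
  shows "word_parity G (u @ r @ v) t \<longleftrightarrow> word_parity G (u @ v) t"
proof -
  let ?t = "conjugate G (inv (word_prod G u)) t"
  have r: "r \<in> lists (carrier G)" "word_prod G r = \<one>" "\<And>t. \<not> word_parity G r t"
    using cox_relatorsD[OF assms(1)] lists_gens_carrier by auto
  have "?t \<in> carrier G" using assms by simp
  then have "word_parity G (r @ v) ?t \<longleftrightarrow> word_parity G v ?t"
    using r assms by (simp add: word_parity_append)
  with r assms show ?thesis by (simp add: word_parity_append)
qed

lemma cox_step_word_parity:
  assumes "cox_step G S x y" "x \<in> lists S \<or> y \<in> lists S"
  shows "x \<in> lists S \<and> y \<in> lists S \<and> (\<forall>t\<in>carrier G. word_parity G x t \<longleftrightarrow> word_parity G y t)"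
  using assms
proof cases
  case (1 r u v)
  then have "x \<in> lists S" "y \<in> lists S" using assms cox_relatorsD(1) by auto
  with 1 show ?thesis using word_parity_insert_relator lists_gens_carrier by auto
qed

lemma cox_equiv_word_parity:
  assumes "cox_equiv G S x y" "x \<in> lists S"
  shows "y \<in> lists S \<and> (\<forall>t\<in>carrier G. word_parity G x t \<longleftrightarrow> word_parity G y t)"
  using assms(1) unfolding cox_equiv_def
proof (induction rule: rtranclp_induct)
  case (step y z)
  then show ?case using cox_step_word_parity by metis
qed (use assms(2) in simp)

text \<open>The only use of the Coxeter presentation.\<close>
lemma not_word_parity_if_word_prod_one:
  assumes "x \<in> lists S" "word_prod G x = \<one>" "t \<in> carrier G"
  shows "\<not> word_parity G x t"
proof -
  have "cox_equiv G S x []"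
    using coxeter_system assms unfolding coxeter_system_def by blast
  then show ?thesis using cox_equiv_word_parity assms by fastforce
qed

lemma word_parity_eq_if_word_prod_eq:
  assumes x: "x \<in> lists S" and y: "y \<in> lists S" and xy: "word_prod G x = word_prod G y"
    and t: "t \<in> carrier G"
  shows "word_parity G x t \<longleftrightarrow> word_parity G y t"
proof -
  have carr: "x \<in> lists (carrier G)" "y \<in> lists (carrier G)" "rev y \<in> lists (carrier G)"
    using x y gens_closed by auto
  have rev_y: "rev y \<in> lists S" "word_prod G (rev y) = inv (word_prod G y)"
    using y gens_involutions by (auto intro!: word_prod_rev)
  let ?t = "conjugate G (inv (word_prod G y)) t"
  have "\<not> word_parity G (rev y @ w) ?t" if "w \<in> lists S" "word_prod G w = word_prod G y" for w
    using that rev_y carr lists_gens_carrier t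
    by (intro not_word_parity_if_word_prod_one) (auto simp: word_prod_append)
  from this[OF x xy] this[OF y refl] show ?thesis
    using carr rev_y t by (simp add: word_parity_append)
qed

lemma generate_eq_word_prods: "A \<subseteq> S \<Longrightarrow> generate G A = word_prod G ` lists A"
  using gens_involutions by (intro generate_involutions_eq) auto

lemma exists_gens_word: "g \<in> carrier G \<Longrightarrow> \<exists>x. x \<in> lists S \<and> word_prod G x = g"
  using generate_eq_word_prods[of S] generate_gens by auto

text \<open>The reflection cocycle \<open>N(g)\<close>; by \<open>word_parity_eq_if_word_prod_eq\<close> the chosen
  word is irrelevant.\<close>
definition inversions :: "'a \<Rightarrow> 'a set" where
  "inversions g = {t \<in> carrier G. word_parity G (SOME x. x \<in> lists S \<and> word_prod G x = g) t}"

lemma inversions_word_prod: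
  assumes "x \<in> lists S"
  shows "inversions (word_prod G x) = {t \<in> carrier G. word_parity G x t}"
proof -
  let ?y = "SOME y. y \<in> lists S \<and> word_prod G y = word_prod G x"
  have "?y \<in> lists S \<and> word_prod G ?y = word_prod G x"
    using someI[of "\<lambda>y. y \<in> lists S \<and> word_prod G y = word_prod G x" x] assms by simp
  then have "word_parity G ?y t \<longleftrightarrow> word_parity G x t" if "t \<in> carrier G" for t
    using word_parity_eq_if_word_prod_eq assms that by blast
  then show ?thesis unfolding inversions_def by auto
qed

lemma inversions_subset_carrier: "inversions g \<subseteq> carrier G"
  by (auto simp: inversions_def)

lemma inversions_one: "inversions \<one> = {}"
  using inversions_word_prod[of "[]"] by simp

lemma inversions_gen: "s \<in> S \<Longrightarrow> inversions s = {s}"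
  using inversions_word_prod[of "[s]"] gens_closed by (auto simp: word_parity_singleton)

lemma mem_inversions_mult:
  assumes "g \<in> carrier G" "h \<in> carrier G" "t \<in> carrier G"
  shows "t \<in> inversions (g \<otimes> h) \<longleftrightarrow> (t \<in> inversions g) \<noteq> (conjugate G (inv g) t \<in> inversions h)"
proof -
  obtain x y where x: "x \<in> lists S" "word_prod G x = g" and y: "y \<in> lists S" "word_prod G y = h"
    using exists_gens_word assms by metis
  then have "word_prod G x \<otimes> word_prod G y = word_prod G (x @ y)"
    using lists_gens_carrier by (simp add: word_prod_append)
  with x y assms(3) show ?thesis
    unfolding x(2)[symmetric] y(2)[symmetric]
    using lists_gens_carrier by (simp add: inversions_word_prod word_parity_append)
qed

lemma inversions_subset_word_reflections:
  assumes "x \<in> lists S"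
  shows "inversions (word_prod G x) \<subseteq> set (word_reflections G x)"
proof
  fix t assume "t \<in> inversions (word_prod G x)"
  then have "odd (count_list (word_reflections G x) t)"
    using assms by (simp add: inversions_word_prod word_parity_def)
  then show "t \<in> set (word_reflections G x)" using count_notin by fastforce
qed

lemma finite_inversions:
  assumes "g \<in> carrier G"
  shows "finite (inversions g)"
proof -
  obtain x where "x \<in> lists S" "word_prod G x = g" using exists_gens_word assms by blast
  then have "inversions g \<subseteq> set (word_reflections G x)"
    using inversions_subset_word_reflections by blast
  then show ?thesis by (rule finite_subset) simp
qed

lemma card_inversions_le_length: "x \<in> lists S \<Longrightarrow> card (inversions (word_prod G x)) \<le> length x"
  using card_mono[OF finite_set inversions_subset_word_reflections] card_length
  by (metis le_trans length_word_reflections)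

lemma inversions_reduced_word:
  assumes "A \<subseteq> S" "reduced_word G A x"
  shows "inversions (word_prod G x) = set (word_reflections G x)"
    and "card (inversions (word_prod G x)) = length x"
proof -
  have distinct: "distinct (word_reflections G x)"
    using assms gens_involutions by (intro distinct_word_reflections_if_reduced) auto
  have x: "x \<in> lists S" using assms unfolding reduced_word_def by auto
  then show "inversions (word_prod G x) = set (word_reflections G x)"
    using distinct word_reflections_closed[OF lists_gens_carrier[OF x]]
    by (auto simp: inversions_word_prod word_parity_def odd_count_list_distinct)
  with distinct show "card (inversions (word_prod G x)) = length x"
    by (simp add: distinct_card)
qed

lemma inversions_subset_generate:
  assumes "A \<subseteq> S" "g \<in> generate G A"
  shows "inversions g \<subseteq> generate G A"
proof -
  obtain x where "x \<in> lists A" "word_prod G x = g"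
    using assms generate_eq_word_prods by (metis imageE)
  then show ?thesis
    using assms inversions_subset_word_reflections word_reflections_subset_generate gens_closed
    by blast
qed

lemma mem_gens_if_card_inversions_one:
  assumes "A \<subseteq> S" "g \<in> generate G A" "card (inversions g) = 1"
  shows "g \<in> A"
proof -
  obtain x where x: "x \<in> lists A" "word_prod G x = g"
    using assms generate_eq_word_prods by (metis imageE)
  then obtain y where y: "reduced_word G A y" "word_prod G y = g"
    using reduced_word_exists by metis
  then have "length y = 1" using inversions_reduced_word assms by metis
  then obtain a where "y = [a]" by (auto simp: length_Suc_conv)
  with y assms show ?thesis unfolding reduced_word_def using gens_closed by auto
qed

lemma conjugate_gen_mem_inversions:
  assumes "g \<in> carrier G" "s \<in> S"
  shows "conjugate G g s \<in> inversions (conjugate G g s)"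
proof -
  let ?t = "conjugate G g s"
  have s: "s \<in> carrier G" "inv s = s" "s \<otimes> s = \<one>"
    using assms gens_involutions involution_inv by (auto simp: involutions_def)
  have carr: "?t \<in> carrier G" "g \<otimes> s \<in> carrier G" "inv g \<in> carrier G" using assms s by auto
  have "inv (g \<otimes> s) \<otimes> g = s" using assms s by (simp add: inv_mult_group m_assoc)
  then have "conjugate G (inv (g \<otimes> s)) ?t = conjugate G s s"
    using assms s by (simp add: conjugate_conjugate)
  also have "\<dots> = s" using s by (simp add: conjugate_def)
  finally have "conjugate G (inv (g \<otimes> s)) ?t = s" .
  moreover have "conjugate G (inv g) ?t = s" using assms s by simp
  ultimately have "?t \<in> inversions (g \<otimes> s \<otimes> inv g) \<longleftrightarrow> (?t \<notin> inversions g) \<noteq> (s \<in> inversions (inv g))"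
    and "?t \<in> inversions g \<longleftrightarrow> s \<in> inversions (inv g)"
    using mem_inversions_mult[OF carr(2,3,1)] mem_inversions_mult[OF assms(1) s(1) carr(1)]
      mem_inversions_mult[OF assms(1) carr(3,1)] inversions_gen[OF assms(2)] inversions_one assms
    by auto
  then show ?thesis by (simp add: conjugate_def)
qed

lemma inversions_mult:
  assumes "g \<in> carrier G" "h \<in> carrier G"
  shows "inversions (g \<otimes> h) = sym_diff (inversions g) (conjugate G g ` inversions h)"
proof (rule Set.set_eqI)
  fix t
  show "t \<in> inversions (g \<otimes> h) \<longleftrightarrow> t \<in> sym_diff (inversions g) (conjugate G g ` inversions h)"
  proof (cases "t \<in> carrier G")
    case True
    then show ?thesis
      using assms mem_inversions_mult mem_conjugate_image_iff inversions_subset_carrier by auto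
  next
    case False
    then show ?thesis
      using assms inversions_subset_carrier[of h] inversions_subset_carrier[of g]
        inversions_subset_carrier[of "g \<otimes> h"]
      by (auto simp: subset_iff)
  qed
qed

lemma inversions_mult_disjoint:
  assumes "g \<in> carrier G" "h \<in> carrier G" "inversions g \<inter> conjugate G g ` inversions h = {}"
  shows "inversions (g \<otimes> h) = inversions g \<union> conjugate G g ` inversions h"
  using assms by (auto simp: inversions_mult)

subsection \<open>Shortest coset representatives\<close>

lemma inversions_disjoint_generate_if_min:
  assumes A: "A \<subseteq> S" and g: "g \<in> carrier G"
    and min: "\<And>z. z \<in> generate G A \<Longrightarrow> card (inversions g) \<le> card (inversions (z \<otimes> g))"
  shows "inversions g \<inter> generate G A = {}"
proof (rule ccontr)
  assume "inversions g \<inter> generate G A \<noteq> {}"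
  then obtain u where u: "u \<in> inversions g" "u \<in> generate G A" by auto
  obtain x where x: "reduced_word G S x" "word_prod G x = g"
    using exists_gens_word[OF g] reduced_word_exists by metis
  then have N: "inversions g = set (word_reflections G x)" "card (inversions g) = length x"
    using inversions_reduced_word[of S x] by auto
  then obtain i where i: "i < length x" "u = word_reflections G x ! i"
    using u by (metis in_set_conv_nth length_word_reflections)
  have xS: "x \<in> lists S" using x unfolding reduced_word_def by auto
  then have "u \<otimes> g = word_prod G (take i x @ drop (Suc i) x)"
    using word_reflection_mult_word_prod[of x i] i x gens_involutions by auto
  moreover have "take i x @ drop (Suc i) x \<in> lists S"
    using xS by (auto dest: in_set_takeD in_set_dropD)
  ultimately have "card (inversions (u \<otimes> g)) < card (inversions g)"
    using card_inversions_le_length N i by fastforce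
  with min[OF u(2)] show False by simp
qed

text \<open>For a shortest \<open>g\<close> in its coset \<open>\<langle>A\<rangle> g\<close>, a reflection \<open>x = g r g\<inverse>\<close> lying in
  \<open>\<langle>A\<rangle>\<close> satisfies both \<open>N(g r) = N(g) \<union> {x}\<close> and \<open>N(x g) = N(x) \<union> x N(g) x\<inverse>\<close>
  (disjoint unions), so \<open>x\<close> has \<open>A\<close>-length \<open>|N(x)| = 1\<close>.\<close>
lemma conjugate_gen_mem_gens_if_min:
  assumes A: "A \<subseteq> S" and g: "g \<in> carrier G"
    and min: "\<And>z. z \<in> generate G A \<Longrightarrow> card (inversions g) \<le> card (inversions (z \<otimes> g))"
    and r: "r \<in> S" and x_H: "conjugate G g r \<in> generate G A"
  shows "conjugate G g r \<in> A"
proof -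
  let ?H = "generate G A" and ?x = "conjugate G g r"
  have H: "subgroup ?H G" using A gens_closed by (intro generate_is_subgroup) auto
  have disjoint: "inversions g \<inter> ?H = {}"
    using inversions_disjoint_generate_if_min[OF A g min] .
  have r_carr: "r \<in> carrier G" and x_carr: "?x \<in> carrier G"
    using r g gens_closed by auto
  have "inversions (g \<otimes> r) = inversions g \<union> {?x}"
    using inversions_mult_disjoint[OF g r_carr] inversions_gen[OF r] disjoint x_H by auto
  moreover have "?x \<notin> inversions g" using disjoint x_H by auto
  ultimately have card_gr: "card (inversions (g \<otimes> r)) = card (inversions g) + 1"
    using finite_inversions[OF g] by simp
  have "conjugate G ?x ` inversions g \<inter> ?H = {}"
  proof -
    have "v \<in> ?H" if "v \<in> inversions g" "conjugate G ?x v \<in> ?H" for v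
    proof -
      have "v \<in> carrier G" using that inversions_subset_carrier by blast
      then show ?thesis
        using x_carr conjugate_mem_subgroup[OF H subgroup.m_inv_closed[OF H x_H] that(2)] by simp
    qed
    then show ?thesis using disjoint by auto
  qed
  moreover have "inversions ?x \<subseteq> ?H"
    using inversions_subset_generate[OF A x_H] .
  ultimately have "inversions (?x \<otimes> g) = inversions ?x \<union> conjugate G ?x ` inversions g"
    and "inversions ?x \<inter> conjugate G ?x ` inversions g = {}"
    using inversions_mult_disjoint[OF x_carr g] by auto
  then have "card (inversions (?x \<otimes> g)) = card (inversions ?x) + card (inversions g)"
    using finite_inversions x_carr g inj_on_conjugate[OF x_carr] inversions_subset_carrier
    by (simp add: card_Un_disjoint card_image inj_on_subset)
  moreover have "g \<otimes> r = ?x \<otimes> g"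
    using g r_carr by (simp add: conjugate_def m_assoc)
  ultimately have "card (inversions ?x) = 1" using card_gr by simp
  then show ?thesis using mem_gens_if_card_inversions_one[OF A x_H] by simp
qed

lemma exists_coset_rep_conjugating_into_gens:
  assumes A: "A \<subseteq> S" and g0: "g0 \<in> carrier G"
  shows "\<exists>y\<in>generate G A. \<forall>r\<in>S.
           conjugate G (y \<otimes> g0) r \<in> generate G A \<longrightarrow> conjugate G (y \<otimes> g0) r \<in> A"
proof -
  let ?H = "generate G A"
  have H: "subgroup ?H G" using A gens_closed by (intro generate_is_subgroup) auto
  obtain y where y: "y \<in> ?H"
    and y_min: "\<And>z. z \<in> ?H \<Longrightarrow> card (inversions (y \<otimes> g0)) \<le> card (inversions (z \<otimes> g0))"
    using ex_has_least_nat[of "\<lambda>z. z \<in> ?H" \<one> "\<lambda>z. card (inversions (z \<otimes> g0))"] generate.one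
    by metis
  have y_carr: "y \<in> carrier G" using y H subgroup.subset by blast
  have "card (inversions (y \<otimes> g0)) \<le> card (inversions (z \<otimes> (y \<otimes> g0)))" if "z \<in> ?H" for z
  proof -
    have "z \<in> carrier G" using that H subgroup.subset by blast
    then have "z \<otimes> (y \<otimes> g0) = (z \<otimes> y) \<otimes> g0" using y_carr g0 by (simp add: m_assoc)
    then show ?thesis using y_min subgroup.m_closed[OF H that y] by simp
  qed
  then show ?thesis
    using conjugate_gen_mem_gens_if_min[OF A] y y_carr g0 by blast
qed

lemma simultaneous_conjugate_into_gens:
  assumes A: "A \<subseteq> S" and st: "s \<in> generate G A" "t \<in> generate G A" and w: "w \<in> carrier G"
    and ws: "conjugate G w s \<in> S" and wt: "conjugate G w t \<in> S"
  shows "\<exists>y\<in>generate G A. conjugate G y s \<in> A \<and> conjugate G y t \<in> A"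
proof -
  let ?H = "generate G A"
  have H: "subgroup ?H G" using A gens_closed by (intro generate_is_subgroup) auto
  obtain y where y: "y \<in> ?H"
    and y_conj: "\<And>r. r \<in> S \<Longrightarrow> conjugate G (y \<otimes> inv w) r \<in> ?H \<Longrightarrow> conjugate G (y \<otimes> inv w) r \<in> A"
    using exists_coset_rep_conjugating_into_gens[OF A inv_closed[OF w]] by blast
  have y_carr: "y \<in> carrier G" using y H subgroup.subset by blast
  have "conjugate G (y \<otimes> inv w) (conjugate G w u) = conjugate G y u" if "u \<in> ?H" for u
  proof -
    have "u \<in> carrier G" using that H subgroup.subset by blast
    then show ?thesis using y_carr w by (simp add: conjugate_conjugate m_assoc)
  qed
  then show ?thesis
    using y y_conj[OF ws] y_conj[OF wt] st conjugate_mem_subgroup[OF H y] by auto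
qed

lemma conj_set_inter_generate_subset:
  assumes A: "A \<subseteq> S"
  shows "conj_set G S \<inter> generate G A \<subseteq> conj_set (G\<lparr>carrier := generate G A\<rparr>) A"
proof
  fix b assume "b \<in> conj_set G S \<inter> generate G A"
  then obtain g s where g: "g \<in> carrier G" and s: "s \<in> S" and b: "b = conjugate G g s"
    and H: "b \<in> generate G A"
    by (auto simp: conj_set_def conjugate_def)
  obtain x where x: "x \<in> lists A" "word_prod G x = b"
    using H A generate_eq_word_prods by (metis imageE)
  then have "b \<in> set (word_reflections G x)"
    using conjugate_gen_mem_inversions[OF g s] inversions_subset_word_reflections[of x] A b by auto
  then obtain i where i: "i < length x" "b = word_reflections G x ! i"
    by (metis in_set_conv_nth length_word_reflections)
  have "x \<in> lists (carrier G)" using x A gens_closed by auto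
  then have "b = conjugate G (word_prod G (take i x)) (x ! i)"
    using i by (simp add: nth_word_reflections)
  moreover have "word_prod G (take i x) \<in> generate G A"
    using x A gens_closed by (intro word_prod_mem_generate) (auto dest: in_set_takeD)
  moreover have "x ! i \<in> A" using x i by auto
  moreover have "subgroup (generate G A) G" using A gens_closed by (intro generate_is_subgroup) auto
  ultimately show "b \<in> conj_set (G\<lparr>carrier := generate G A\<rparr>) A"
    by (auto simp: conj_set_subgroup)
qed

lemma sharp_angled_generate:
  assumes A: "A \<subseteq> S" and J: "J \<subseteq> generate G A" and sharp: "sharp_angled G J S"
  shows "sharp_angled (G\<lparr>carrier := generate G A\<rparr>) J A"
  unfolding sharp_angled_subgroup_iff[OF generate_is_subgroup[OF subset_trans[OF A gens_closed]]]
proof (intro ballI impI)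
  fix s t assume st: "s \<in> J" "t \<in> J" and "2 < cox_m G s t \<and> cox_m G s t \<noteq> 0"
  then obtain w where "w \<in> carrier G" "conjugate G w s \<in> S" "conjugate G w t \<in> S"
    using sharp unfolding sharp_angled_def conjugate_def by blast
  then show "\<exists>w\<in>generate G A. conjugate G w s \<in> A \<and> conjugate G w t \<in> A"
    using simultaneous_conjugate_into_gens[OF A] st J by blast
qed

end

theorem lemma9p1:
  fixes W :: "('a, 'b) monoid_scheme" and S S' B B' :: "'a set"
  assumes "coxeter_system W S"
    and "finite S"
    and "coxeter_system W S'"
    and "S' \<subseteq> conj_set W S"
    and "sharp_angled W S S'"
    and "B \<subseteq> S" and "B' \<subseteq> S'"
    and "generate W B = generate W B'"
  shows "B' \<subseteq> conj_set (W\<lparr>carrier := generate W B\<rparr>) B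
         \<and> sharp_angled (W\<lparr>carrier := generate W B\<rparr>) B B'"
proof -
  interpret S: coxeter_group W S using assms(1) by (rule coxeter_groupI)
  interpret S': coxeter_group W S' using assms(3) by (rule coxeter_groupI)
  have "B' \<subseteq> conj_set W S \<inter> generate W B"
    using assms(4,7,8) by (auto intro: generate.incl)
  then have "B' \<subseteq> conj_set (W\<lparr>carrier := generate W B\<rparr>) B"
    using S.conj_set_inter_generate_subset[OF assms(6)] by blast
  moreover have "sharp_angled W B S'"
    using assms(5,6) unfolding sharp_angled_def by blast
  then have "sharp_angled (W\<lparr>carrier := generate W B'\<rparr>) B B'"
    using S'.sharp_angled_generate[OF assms(7)] assms(8) by (auto intro: generate.incl)
  ultimately show ?thesis using assms(8) by simp
qed

end
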